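(* Let $K$ be a matrix convex set in $h$ self-adjoint variables that equals the matrix convex hull of its free extreme points, let $g<h$, and let $X\in\mathcal P_gK(n)$ be a free extreme point of $\mathcal P_gK$. Then either there is $Y$ with $(X,Y)$ a free extreme point of $K$, or there exist $Z\in\mathcal P_gK$ and $Y$ such that $(X\oplus Z,Y)$ is a free extreme point of $K$.
   Context: A matrix convex set $K$ is a graded set of self-adjoint tuples closed under matrix convex combinations $\sum_iV_i^*X^{(i)}V_i$ with $\sum_iV_i^*V_i=I$; $\mathrm{mconv}(S)$ is the smallest matrix convex set containing $S$ (no closure). A point $X\in K(n)$ is a free extreme point of $K$ if whenever $X=\sum_iV_i^*X^{(i)}V_i$ is a matrix convex combination of points of $K$ with all $V_i\ne0$, each $X^{(i)}$ is unitarily equivalent to $X$ or to $X\oplus Z$ for some $Z\in K$; equivalently $X$ is irreducible and has only trivial dilations in $K$. $\mathcal P_gK$ is the set of $X$ with $(X,Y)\in K$ for some $Y$ of the same size. *)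

theory Defs
  imports Complex_Main "Jordan_Normal_Form.Matrix"
begin

text \<open>A point of a graded set in d variables is a pair (n, X): a level n > 0 and a
 d-tuple X (list of length d) of self-adjoint complex n x n matrices.\<close>

type_synonym tup = "nat \<times> complex mat list"

definition cadj :: "complex mat \<Rightarrow> complex mat" where
  "cadj A = transpose_mat (map_mat cnj A)"

definition sa_tuple :: "nat \<Rightarrow> tup \<Rightarrow> bool" where
  "sa_tuple d P \<longleftrightarrow> (case P of (n, X) \<Rightarrow>
     0 < n \<and> length X = d \<and> (\<forall>A\<in>set X. A \<in> carrier_mat n n \<and> cadj A = A))"

definition msum :: "nat \<Rightarrow> complex mat list \<Rightarrow> complex mat" where
  "msum n L = foldr (+) L (0\<^sub>m n n)"

definition is_mcc :: "nat \<Rightarrow> tup \<Rightarrow> (complex mat \<times> tup) list \<Rightarrow> bool" where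
  "is_mcc d P L \<longleftrightarrow> (case P of (n, X) \<Rightarrow>
     L \<noteq> [] \<and> length X = d \<and>
     (\<forall>(V, Q)\<in>set L. V \<in> carrier_mat (fst Q) n) \<and>
     msum n (map (\<lambda>(V, Q). cadj V * V) L) = 1\<^sub>m n \<and>
     (\<forall>j<d. X ! j = msum n (map (\<lambda>(V, Q). cadj V * (snd Q ! j) * V) L)))"

definition matrix_convex :: "nat \<Rightarrow> tup set \<Rightarrow> bool" where
  "matrix_convex d K \<longleftrightarrow> (\<forall>P\<in>K. sa_tuple d P) \<and>
     (\<forall>n X L. 0 < n \<longrightarrow> (\<forall>(V, Q)\<in>set L. Q \<in> K) \<longrightarrow> is_mcc d (n, X) L \<longrightarrow> (n, X) \<in> K)"

definition mconv :: "nat \<Rightarrow> tup set \<Rightarrow> tup set" where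
  "mconv d S = \<Inter>{K. matrix_convex d K \<and> S \<subseteq> K}"

definition dsum :: "tup \<Rightarrow> tup \<Rightarrow> tup" where
  "dsum P Q = (case P of (n, X) \<Rightarrow> case Q of (m, Y) \<Rightarrow>
     (n + m, map2 (\<lambda>A B. four_block_mat A (0\<^sub>m n m) (0\<^sub>m m n) B) X Y))"

definition unit_equiv :: "tup \<Rightarrow> tup \<Rightarrow> bool" where
  "unit_equiv P Q \<longleftrightarrow> (case P of (n, X) \<Rightarrow> case Q of (m, Y) \<Rightarrow>
     n = m \<and> (\<exists>U\<in>carrier_mat n n. cadj U * U = 1\<^sub>m n \<and> U * cadj U = 1\<^sub>m n \<and>
        X = map (\<lambda>B. cadj U * B * U) Y))"

definition free_extreme :: "nat \<Rightarrow> tup set \<Rightarrow> tup \<Rightarrow> bool" where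
  "free_extreme d K P \<longleftrightarrow> P \<in> K \<and>
     (\<forall>L. (\<forall>(V, Q)\<in>set L. Q \<in> K \<and> V \<noteq> 0\<^sub>m (fst Q) (fst P)) \<longrightarrow> is_mcc d P L \<longrightarrow>
        (\<forall>(V, Q)\<in>set L. unit_equiv Q P \<or> (\<exists>Z\<in>K. unit_equiv Q (dsum P Z))))"

definition proj :: "nat \<Rightarrow> tup set \<Rightarrow> tup set" where
  "proj g K = {(n, X). length X = g \<and> (\<exists>Y. (n, X @ Y) \<in> K)}"

end

theory Submission
  imports Defs
begin

text \<open>
Let \<open>E\<close> be the set of free extreme points of \<open>K\<close>. The points admitting a finite matrix convex
combination of points of \<open>E\<close> form a matrix convex set containing \<open>E\<close>, so every point of
\<open>K = mconv E\<close>, in particular some \<open>(X, Y\<^sub>0)\<close>, is such a combination \<open>\<Sum> V\<^sub>i\<^sup>* Q\<^sub>i V\<^sub>i\<close>.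
Keeping only the first \<open>g\<close> coordinates and discarding the terms with \<open>V\<^sub>i = 0\<close> gives a matrix convex
combination of points of \<open>\<P>\<^sub>g K\<close> representing \<open>X\<close>. As \<open>X\<close> is free extreme in \<open>\<P>\<^sub>g K\<close>, the
projection of any \<open>Q\<^sub>i\<close> is unitarily equivalent to \<open>X\<close> or to \<open>X \<oplus> Z\<close>; conjugating \<open>Q\<^sub>i\<close> by that
unitary, which preserves free extremity in \<open>K\<close>, yields the required point.
\<close>

subsection \<open>Conjugate transpose and compressions\<close>

lemma cadj_carrier [simp]: "A \<in> carrier_mat m n \<Longrightarrow> cadj A \<in> carrier_mat n m"
  unfolding cadj_def by auto

lemma cadj_dim [simp]: "dim_row (cadj A) = dim_col A" "dim_col (cadj A) = dim_row A"
  unfolding cadj_def by auto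

lemma cadj_mult:
  assumes "A \<in> carrier_mat m k" "B \<in> carrier_mat k n"
  shows "cadj (A * B) = cadj B * cadj A"
  using assms unfolding cadj_def
  by (intro eq_matI) (auto simp: scalar_prod_def cnj_sum mult.commute intro!: sum.cong)

lemma cadj_cadj [simp]: "cadj (cadj A) = A"
  unfolding cadj_def by (intro eq_matI) auto

lemma cadj_one [simp]: "cadj (1\<^sub>m n) = 1\<^sub>m n"
  unfolding cadj_def by (intro eq_matI) auto

lemma cadj_zero [simp]: "cadj (0\<^sub>m m n) = 0\<^sub>m n m"
  unfolding cadj_def by (intro eq_matI) auto

lemma cadj_four_block_mat:
  assumes "A \<in> carrier_mat nr1 nc1" "B \<in> carrier_mat nr1 nc2"
    "C \<in> carrier_mat nr2 nc1" "D \<in> carrier_mat nr2 nc2"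
  shows "cadj (four_block_mat A B C D) = four_block_mat (cadj A) (cadj C) (cadj B) (cadj D)"
  using assms unfolding cadj_def by (intro eq_matI) auto

lemma assoc_mult_mat_dims:
  "dim_col A = dim_row B \<Longrightarrow> dim_col B = dim_row C \<Longrightarrow> A * B * C = A * (B * C)"
  by (rule assoc_mult_mat[of A "dim_row A" "dim_col A" B "dim_col B" C "dim_col C"]) auto

text \<open>No hypothesis on \<open>A\<close> is needed: the dimensions of a product are those of its outer factors.\<close>

lemma compression_carrier [simp]: "V \<in> carrier_mat q n \<Longrightarrow> cadj V * A * V \<in> carrier_mat n n"
  by (intro carrier_matI) (simp_all add: carrier_matD)

lemma compression_zero [simp]: "0\<^sub>m n q * A * 0\<^sub>m q n = (0\<^sub>m n n :: complex mat)"
  by (intro eq_matI) (auto simp: scalar_prod_def)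

lemma compression_mult:
  assumes "V \<in> carrier_mat q m" "A \<in> carrier_mat q q" "U \<in> carrier_mat m n"
  shows "cadj (V * U) * A * (V * U) = cadj U * (cadj V * A * V) * U"
  using assms by (simp add: cadj_mult[of V q m U n] assoc_mult_mat_dims carrier_matD)

subsection \<open>Finite sums of matrices\<close>

lemma msum_Nil [simp]: "msum n [] = 0\<^sub>m n n"
  unfolding msum_def by simp

lemma msum_Cons [simp]: "msum n (x # xs) = x + msum n xs"
  unfolding msum_def by simp

lemma msum_carrier: "\<forall>x\<in>set xs. x \<in> carrier_mat n n \<Longrightarrow> msum n xs \<in> carrier_mat n n"
  by (induction xs) auto

lemma msum_append:
  "\<forall>x\<in>set xs. x \<in> carrier_mat n n \<Longrightarrow> \<forall>x\<in>set ys. x \<in> carrier_mat n n \<Longrightarrow>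
    msum n (xs @ ys) = msum n xs + msum n ys"
proof (induction xs)
  case Nil
  then show ?case by (simp add: msum_carrier)
next
  case (Cons x xs)
  have "msum n xs \<in> carrier_mat n n" "msum n ys \<in> carrier_mat n n"
    using Cons.prems by (auto intro!: msum_carrier)
  then show ?case using Cons assoc_add_mat[of x n n "msum n xs" "msum n ys"] by simp
qed

lemma msum_filter:
  assumes "\<forall>x\<in>set xs. f x \<in> carrier_mat n n" "\<forall>x\<in>set xs. \<not> P x \<longrightarrow> f x = 0\<^sub>m n n"
  shows "msum n (map f (filter P xs)) = msum n (map f xs)"
  using assms
proof (induction xs)
  case (Cons x xs)
  have "msum n (map f xs) \<in> carrier_mat n n" using Cons.prems by (intro msum_carrier) auto
  then show ?case using Cons by auto
qed simp

lemma msum_compression: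
  assumes V: "V \<in> carrier_mat m n" and F: "\<forall>x\<in>set xs. F x \<in> carrier_mat m m"
  shows "msum n (map (\<lambda>x. cadj V * F x * V) xs) = cadj V * msum m (map F xs) * V"
  using F
proof (induction xs)
  case (Cons x xs)
  have S: "msum m (map F xs) \<in> carrier_mat m m" using Cons.prems by (intro msum_carrier) auto
  have Fx: "F x \<in> carrier_mat m m" using Cons.prems by simp
  have "cadj V * (F x + msum m (map F xs)) * V = (cadj V * F x + cadj V * msum m (map F xs)) * V"
    using V S Fx by (simp add: mult_add_distrib_mat[of _ n m])
  also have "\<dots> = cadj V * F x * V + cadj V * msum m (map F xs) * V"
    using V S Fx by (intro add_mult_distrib_mat[of _ n m]) auto
  finally show ?case using Cons by simp
qed (use V in simp)

subsection \<open>Unitaries and direct sums\<close>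

definition unitary :: "nat \<Rightarrow> complex mat \<Rightarrow> bool" where
  "unitary m U \<longleftrightarrow> U \<in> carrier_mat m m \<and> cadj U * U = 1\<^sub>m m \<and> U * cadj U = 1\<^sub>m m"

lemma unitary_one: "unitary m (1\<^sub>m m)"
  unfolding unitary_def by simp

lemma unitary_cadj: "unitary m U \<Longrightarrow> unitary m (cadj U)"
  unfolding unitary_def by auto

lemma unitary_mult:
  assumes S: "unitary m S" and T: "unitary m T"
  shows "unitary m (S * T)"
proof -
  have c: "S \<in> carrier_mat m m" "T \<in> carrier_mat m m" "cadj S \<in> carrier_mat m m" "cadj T \<in> carrier_mat m m"
    using S T unfolding unitary_def by auto
  have "cadj (S * T) * (S * T) = cadj T * (cadj S * S) * T"
    "(S * T) * cadj (S * T) = S * (T * cadj T) * cadj S"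
    using c by (simp_all add: cadj_mult[of _ m m _ m] assoc_mult_mat_dims carrier_matD)
  then show ?thesis using S T c unfolding unitary_def by simp
qed

lemma unitary_conj_cancel:
  assumes "unitary m U" "B \<in> carrier_mat m m"
  shows "U * (cadj U * B * U) * cadj U = B"
proof -
  have U: "U \<in> carrier_mat m m" "cadj U \<in> carrier_mat m m" "U * cadj U = 1\<^sub>m m"
    using assms(1) unfolding unitary_def by auto
  have "U * (cadj U * B * U) * cadj U = (U * cadj U) * B * (U * cadj U)"
    using U(1,2) assms(2) by (simp add: assoc_mult_mat_dims carrier_matD)
  then show ?thesis using U(3) assms(2) by simp
qed

lemma unit_equiv_iff:
  "unit_equiv (k, Y) (m, W) \<longleftrightarrow> k = m \<and> (\<exists>U. unitary m U \<and> Y = map (\<lambda>B. cadj U * B * U) W)"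
  unfolding unit_equiv_def unitary_def by auto

lemma unit_equiv_trans_conj:
  assumes "unit_equiv P (m, W)" "unitary m S" "W = map (\<lambda>B. cadj S * B * S) W'"
    "\<forall>B\<in>set W'. B \<in> carrier_mat m m"
  shows "unit_equiv P (m, W')"
proof -
  obtain k Y where P: "P = (k, Y)" by force
  obtain T where k: "k = m" and T: "unitary m T" and Y: "Y = map (\<lambda>B. cadj T * B * T) W"
    using assms(1) unfolding P unit_equiv_iff by auto
  have c: "S \<in> carrier_mat m m" "T \<in> carrier_mat m m"
    using assms T unfolding unitary_def by auto
  have "Y = map (\<lambda>B. cadj (S * T) * B * (S * T)) W'"
    unfolding Y assms(3) using c assms(4)
    by (auto simp: cadj_mult[of _ m m _ m] assoc_mult_mat_dims carrier_matD)
  then show ?thesis unfolding P unit_equiv_iff using k unitary_mult[OF assms(2) T] by blast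
qed

definition bdiag :: "nat \<Rightarrow> nat \<Rightarrow> complex mat \<Rightarrow> complex mat \<Rightarrow> complex mat" where
  "bdiag m k A B = four_block_mat A (0\<^sub>m m k) (0\<^sub>m k m) B"

lemma dsum_eq_bdiag: "dsum (m, W) (k, Zs) = (m + k, map2 (bdiag m k) W Zs)"
  unfolding dsum_def bdiag_def by simp

lemma bdiag_carrier:
  "A \<in> carrier_mat m m \<Longrightarrow> B \<in> carrier_mat k k \<Longrightarrow> bdiag m k A B \<in> carrier_mat (m + k) (m + k)"
  unfolding bdiag_def by auto

lemma map2_bdiag_carrier:
  "\<forall>B\<in>set W. B \<in> carrier_mat m m \<Longrightarrow> \<forall>B\<in>set Zs. B \<in> carrier_mat k k \<Longrightarrow>
    \<forall>B\<in>set (map2 (bdiag m k) W Zs). B \<in> carrier_mat (m + k) (m + k)"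
  by (auto dest: set_zip_leftD set_zip_rightD intro!: bdiag_carrier)

lemma bdiag_mult:
  assumes "A \<in> carrier_mat m m" "B \<in> carrier_mat k k" "C \<in> carrier_mat m m" "D \<in> carrier_mat k k"
  shows "bdiag m k A B * bdiag m k C D = bdiag m k (A * C) (B * D)"
  unfolding bdiag_def using assms
  by (subst mult_four_block_mat[of A m m "0\<^sub>m m k" k "0\<^sub>m k m" k B C m "0\<^sub>m m k" k "0\<^sub>m k m" D]) auto

lemma bdiag_cadj:
  "A \<in> carrier_mat m m \<Longrightarrow> B \<in> carrier_mat k k \<Longrightarrow> cadj (bdiag m k A B) = bdiag m k (cadj A) (cadj B)"
  unfolding bdiag_def by (subst cadj_four_block_mat[of A m m _ k _ k]) auto

lemma bdiag_one: "bdiag m k (1\<^sub>m m) (1\<^sub>m k) = 1\<^sub>m (m + k)"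
  unfolding bdiag_def by (intro eq_matI) auto

lemma unitary_bdiag:
  assumes "unitary m S"
  shows "unitary (m + k) (bdiag m k S (1\<^sub>m k))"
proof -
  have "S \<in> carrier_mat m m" "cadj S \<in> carrier_mat m m" using assms unfolding unitary_def by auto
  then show ?thesis
    using assms unfolding unitary_def by (simp add: bdiag_carrier bdiag_cadj bdiag_mult bdiag_one)
qed

lemma bdiag_conj:
  assumes "S \<in> carrier_mat m m" "A \<in> carrier_mat m m" "B \<in> carrier_mat k k"
  shows "cadj (bdiag m k S (1\<^sub>m k)) * bdiag m k A B * bdiag m k S (1\<^sub>m k) = bdiag m k (cadj S * A * S) B"
proof -
  have "cadj S * A \<in> carrier_mat m m" using assms by (intro mult_carrier_mat[of _ m m]) auto
  then show ?thesis using assms by (simp add: bdiag_cadj bdiag_mult)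
qed

text \<open>Conjugating \<open>W\<close> by \<open>S\<close> amounts to conjugating \<open>W \<oplus> Z\<close> by \<open>S \<oplus> 1\<close>.\<close>

lemma unit_equiv_dsum_trans_conj:
  assumes "unit_equiv P (dsum (m, W) (k, Zs))" "unitary m S" "W = map (\<lambda>B. cadj S * B * S) W'"
    "\<forall>B\<in>set W'. B \<in> carrier_mat m m" "\<forall>B\<in>set Zs. B \<in> carrier_mat k k"
  shows "unit_equiv P (dsum (m, W') (k, Zs))"
proof -
  let ?S = "bdiag m k S (1\<^sub>m k)"
  have S: "S \<in> carrier_mat m m" using assms(2) unfolding unitary_def by auto
  have "\<forall>(A, B)\<in>set (zip W' Zs). A \<in> carrier_mat m m \<and> B \<in> carrier_mat k k"
    using assms(4,5) by (auto dest: set_zip_leftD set_zip_rightD)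
  then have conj: "map2 (bdiag m k) W Zs = map (\<lambda>B. cadj ?S * B * ?S) (map2 (bdiag m k) W' Zs)"
    unfolding assms(3) zip_map1 map_map using S by (auto simp: bdiag_conj)
  show ?thesis
    using unit_equiv_trans_conj[OF _ unitary_bdiag[OF assms(2)] conj map2_bdiag_carrier[OF assms(4,5)]]
      assms(1) unfolding dsum_eq_bdiag by simp
qed

subsection \<open>Matrix convex combinations\<close>

lemma matrix_convex_memberD:
  assumes "matrix_convex h K" "(q, Y) \<in> K"
  shows "0 < q" "length Y = h" "\<forall>A\<in>set Y. A \<in> carrier_mat q q"
  using assms unfolding matrix_convex_def sa_tuple_def by auto

lemma is_mcc_carrier: "is_mcc d (n, X) L \<Longrightarrow> (V, Q) \<in> set L \<Longrightarrow> V \<in> carrier_mat (fst Q) n"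
  unfolding is_mcc_def by auto

text \<open>Writing the normalisation \<open>\<Sum> V\<^sub>i\<^sup>* V\<^sub>i = 1\<close> as \<open>\<Sum> V\<^sub>i\<^sup>* 1 V\<^sub>i = 1\<close> puts it in the same shape
  as the coordinate equations, so both are handled by the same lemmas.\<close>

lemma is_mcc_iff:
  "is_mcc d (n, X) L \<longleftrightarrow> L \<noteq> [] \<and> length X = d \<and> (\<forall>(V, Q)\<in>set L. V \<in> carrier_mat (fst Q) n) \<and>
     msum n (map (\<lambda>(V, Q). cadj V * 1\<^sub>m (fst Q) * V) L) = 1\<^sub>m n \<and>
     (\<forall>j<d. msum n (map (\<lambda>(V, Q). cadj V * (snd Q ! j) * V) L) = X ! j)"
proof (cases "\<forall>(V, Q)\<in>set L. V \<in> carrier_mat (fst Q) n")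
  case True
  then have eq: "map (\<lambda>(V, Q). cadj V * 1\<^sub>m (fst Q) * V) L = map (\<lambda>(V, Q). cadj V * V) L"
    by (intro map_cong) auto
  show ?thesis unfolding is_mcc_def eq by auto
qed (auto simp: is_mcc_def)

definition compress :: "complex mat \<Rightarrow> (complex mat \<times> tup) list \<Rightarrow> (complex mat \<times> tup) list" where
  "compress U L = map (\<lambda>(V, Q). (V * U, Q)) L"

lemma msum_compress:
  assumes L: "\<forall>(V, Q)\<in>set L. V \<in> carrier_mat (fst Q) m \<and> G Q \<in> carrier_mat (fst Q) (fst Q)"
    and U: "U \<in> carrier_mat m n"
  shows "msum n (map (\<lambda>(V, Q). cadj V * G Q * V) (compress U L))
    = cadj U * msum m (map (\<lambda>(V, Q). cadj V * G Q * V) L) * U"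
proof -
  have "map (\<lambda>(V, Q). cadj V * G Q * V) (compress U L)
      = map (\<lambda>x. cadj U * (case x of (V, Q) \<Rightarrow> cadj V * G Q * V) * U) L"
    unfolding compress_def map_map using L U by (auto intro!: compression_mult)
  also have "msum n \<dots> = cadj U * msum m (map (\<lambda>(V, Q). cadj V * G Q * V) L) * U"
    using L by (intro msum_compression[OF U]) auto
  finally show ?thesis .
qed

lemma is_mcc_compress_isometry:
  assumes mc: "matrix_convex h K" and LK: "\<forall>(V, Q)\<in>set L. Q \<in> K"
    and mcc: "is_mcc h (m, W) L" and U: "U \<in> carrier_mat m n" "cadj U * U = 1\<^sub>m n"
  shows "is_mcc h (n, map (\<lambda>B. cadj U * B * U) W) (compress U L)"
proof -
  have Lc: "\<forall>(V, Q)\<in>set L. V \<in> carrier_mat (fst Q) m" using mcc unfolding is_mcc_def by auto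
  have Qc: "\<forall>(V, Q)\<in>set L. snd Q ! j \<in> carrier_mat (fst Q) (fst Q)" if "j < h" for j
    using LK that matrix_convex_memberD[OF mc, of "fst _" "snd _"] by fastforce
  have "msum n (map (\<lambda>(V, Q). cadj V * 1\<^sub>m (fst Q) * V) (compress U L))
      = cadj U * msum m (map (\<lambda>(V, Q). cadj V * 1\<^sub>m (fst Q) * V) L) * U"
    using msum_compress[of L m "\<lambda>Q. 1\<^sub>m (fst Q)" U n] Lc U by auto
  also have "\<dots> = 1\<^sub>m n" using mcc U by (simp add: is_mcc_iff)
  moreover have "msum n (map (\<lambda>(V, Q). cadj V * (snd Q ! j) * V) (compress U L))
      = map (\<lambda>B. cadj U * B * U) W ! j" if j: "j < h" for j
  proof -
    have "msum n (map (\<lambda>(V, Q). cadj V * (snd Q ! j) * V) (compress U L))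
        = cadj U * msum m (map (\<lambda>(V, Q). cadj V * (snd Q ! j) * V) L) * U"
      using msum_compress[of L m "\<lambda>Q. snd Q ! j" U n] Lc Qc[OF j] U by auto
    also have "\<dots> = map (\<lambda>B. cadj U * B * U) W ! j" using mcc j by (simp add: is_mcc_iff)
    finally show ?thesis .
  qed
  ultimately show ?thesis
    using mcc U Lc unfolding is_mcc_iff by (auto simp: compress_def)
qed

lemma matrix_convex_closed:
  "matrix_convex d K \<Longrightarrow> 0 < n \<Longrightarrow> \<forall>(V, Q)\<in>set L. Q \<in> K \<Longrightarrow> is_mcc d (n, X) L \<Longrightarrow> (n, X) \<in> K"
  unfolding matrix_convex_def by blast

lemma is_mcc_single_unitary:
  assumes "unitary m U" "length W = d" "\<forall>A\<in>set W. A \<in> carrier_mat m m"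
  shows "is_mcc d (m, map (\<lambda>B. cadj U * B * U) W) [(U, (m, W))]"
proof -
  have U: "U \<in> carrier_mat m m" "cadj U * U = 1\<^sub>m m" using assms(1) unfolding unitary_def by auto
  have "msum m [cadj U * U] = 1\<^sub>m m" using U by simp
  moreover have "map (\<lambda>B. cadj U * B * U) W ! j = msum m [cadj U * (W ! j) * U]" if "j < d" for j
  proof -
    have "cadj U * (W ! j) * U \<in> carrier_mat m m" using U by simp
    then show ?thesis using that assms(2) by simp
  qed
  ultimately show ?thesis using U assms(2) unfolding is_mcc_def by simp
qed

lemma matrix_convex_unitary_conj:
  assumes mc: "matrix_convex h K" and W: "(m, W) \<in> K" and U: "unitary m U"
  shows "(m, map (\<lambda>B. cadj U * B * U) W) \<in> K"
proof -
  note W' = matrix_convex_memberD[OF mc W]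
  show ?thesis
    using matrix_convex_closed[OF mc W'(1) _ is_mcc_single_unitary[OF U W'(2,3)]] W by simp
qed

lemma unitary_mult_nonzero:
  assumes U: "unitary m U" and V: "V \<in> carrier_mat q m" "V \<noteq> 0\<^sub>m q m"
  shows "V * U \<noteq> 0\<^sub>m q m"
proof
  assume VU: "V * U = 0\<^sub>m q m"
  have Uc: "U \<in> carrier_mat m m" "cadj U \<in> carrier_mat m m" "U * cadj U = 1\<^sub>m m"
    using U unfolding unitary_def by auto
  have "V = V * U * cadj U" using V(1) Uc by (simp add: assoc_mult_mat_dims carrier_matD)
  also have "\<dots> = 0\<^sub>m q m" using VU Uc by simp
  finally show False using V(2) by contradiction
qed

lemma unit_equiv_alternative_trans_conj:
  assumes mc: "matrix_convex h K" and S: "unitary m S" and W: "W = map (\<lambda>B. cadj S * B * S) W'"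
    and W': "\<forall>B\<in>set W'. B \<in> carrier_mat m m"
    and alt: "unit_equiv Q (m, W) \<or> (\<exists>Z\<in>K. unit_equiv Q (dsum (m, W) Z))"
  shows "unit_equiv Q (m, W') \<or> (\<exists>Z\<in>K. unit_equiv Q (dsum (m, W') Z))"
proof (cases "unit_equiv Q (m, W)")
  case True
  then show ?thesis using unit_equiv_trans_conj[OF True S W W'] by blast
next
  case False
  then obtain Z where Z: "Z \<in> K" "unit_equiv Q (dsum (m, W) Z)" using alt by blast
  obtain k Zs where kZs: "Z = (k, Zs)" by fastforce
  have "unit_equiv Q (dsum (m, W') (k, Zs))"
    using unit_equiv_dsum_trans_conj[OF Z(2)[unfolded kZs] S W W']
      matrix_convex_memberD(3)[OF mc Z(1)[unfolded kZs]] .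
  then show ?thesis using Z(1) kZs by blast
qed

text \<open>A matrix convex combination for \<open>U\<^sup>* W U\<close> compresses by \<open>U\<^sup>*\<close> to one for \<open>W\<close> with the same
  summands, to which free extremity of \<open>W\<close> applies; conjugating back by \<open>U\<close> transports the
  conclusion to \<open>U\<^sup>* W U\<close>.\<close>

lemma free_extreme_unitary_conj:
  assumes mc: "matrix_convex h K" and fe: "free_extreme h K (m, W)" and U: "unitary m U"
  shows "free_extreme h K (m, map (\<lambda>B. cadj U * B * U) W)"
proof -
  define W' where "W' = map (\<lambda>B. cadj U * B * U) W"
  have WK: "(m, W) \<in> K" using fe unfolding free_extreme_def by auto
  note Wc = matrix_convex_memberD(3)[OF mc WK]
  have U': "unitary m (cadj U)" using unitary_cadj[OF U] .
  have Uc: "U \<in> carrier_mat m m" "cadj U \<in> carrier_mat m m" "cadj (cadj U) * cadj U = 1\<^sub>m m"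
    using U unfolding unitary_def by auto
  have W'c: "\<forall>B\<in>set W'. B \<in> carrier_mat m m" unfolding W'_def using Wc Uc by auto
  have "map (\<lambda>B. cadj (cadj U) * B * cadj U) W' = W"
    unfolding W'_def map_map o_def cadj_cadj
    by (rule map_idI) (use Wc unitary_conj_cancel[OF U] in auto)
  note W_back = this[symmetric]
  note outcome = unit_equiv_alternative_trans_conj[OF mc U' W_back W'c]
  show ?thesis unfolding free_extreme_def W'_def[symmetric]
  proof (intro conjI allI impI)
    show "(m, W') \<in> K" unfolding W'_def using matrix_convex_unitary_conj[OF mc WK U] .
  next
    fix L assume nz: "\<forall>(V, Q)\<in>set L. Q \<in> K \<and> V \<noteq> 0\<^sub>m (fst Q) (fst (m, W'))"
      and mcc: "is_mcc h (m, W') L"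
    have LK: "\<forall>(V, Q)\<in>set L. Q \<in> K" using nz by auto
    have "is_mcc h (m, W) (compress (cadj U) L)"
      using is_mcc_compress_isometry[OF mc LK mcc Uc(2,3)] W_back by simp
    moreover have "Q \<in> K \<and> V * cadj U \<noteq> 0\<^sub>m (fst Q) m" if "(V, Q) \<in> set L" for V Q
      using nz that unitary_mult_nonzero[OF U' is_mcc_carrier[OF mcc that]] by auto
    then have "\<forall>(V, Q)\<in>set (compress (cadj U) L). Q \<in> K \<and> V \<noteq> 0\<^sub>m (fst Q) m"
      unfolding compress_def by auto
    ultimately have fe_W: "\<forall>(V, Q)\<in>set (compress (cadj U) L).
        unit_equiv Q (m, W) \<or> (\<exists>Z\<in>K. unit_equiv Q (dsum (m, W) Z))"
      using fe unfolding free_extreme_def by auto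
    have "unit_equiv Q (m, W') \<or> (\<exists>Z\<in>K. unit_equiv Q (dsum (m, W') Z))" if "(V, Q) \<in> set L" for V Q
    proof (rule outcome)
      have "(V * cadj U, Q) \<in> set (compress (cadj U) L)" using that unfolding compress_def by force
      then show "unit_equiv Q (m, W) \<or> (\<exists>Z\<in>K. unit_equiv Q (dsum (m, W) Z))" using fe_W by auto
    qed
    then show "\<forall>(V, Q)\<in>set L. unit_equiv Q (m, W') \<or> (\<exists>Z\<in>K. unit_equiv Q (dsum (m, W') Z))"
      by auto
  qed
qed

subsection \<open>The matrix convex hull\<close>

definition mcc_decomposable :: "nat \<Rightarrow> tup set \<Rightarrow> tup \<Rightarrow> bool" where
  "mcc_decomposable d E P \<longleftrightarrow> (\<exists>L. (\<forall>(V, Q)\<in>set L. Q \<in> E) \<and> is_mcc d P L)"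

lemma dim_col_compress: "(V, Q) \<in> set (compress U L) \<Longrightarrow> dim_col V = dim_col U"
  unfolding compress_def by auto

text \<open>Substituting, for each summand \<open>V\<^sup>* Q V\<close>, a combination \<open>Q = \<Sum> W\<^sup>* R W\<close> gives the
  combination \<open>\<Sum> (W V)\<^sup>* R (W V)\<close>.\<close>

lemma msum_concat_compress:
  assumes "\<forall>(V, Q)\<in>set L. V \<in> carrier_mat (fst Q) n \<and>
      (\<forall>(W, R)\<in>set (f Q). W \<in> carrier_mat (fst R) (fst Q) \<and> G R \<in> carrier_mat (fst R) (fst R)) \<and>
      msum (fst Q) (map (\<lambda>(W, R). cadj W * G R * W) (f Q)) = H Q"
  shows "msum n (map (\<lambda>(V, Q). cadj V * G Q * V) (concat (map (\<lambda>(V, Q). compress V (f Q)) L)))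
    = msum n (map (\<lambda>(V, Q). cadj V * H Q * V) L)"
  using assms
proof (induction L)
  case (Cons x L)
  obtain V Q where x: "x = (V, Q)" by (cases x) blast
  let ?g = "\<lambda>(V, Q). cadj V * G Q * V"
  have V: "V \<in> carrier_mat (fst Q) n" using Cons.prems x by auto
  have carrier: "\<forall>y\<in>set (map ?g (compress U M)). y \<in> carrier_mat n n"
    if "dim_col U = n" for U :: "complex mat" and M
    using that dim_col_compress[of _ _ U M] by (auto intro!: carrier_matI)
  have "\<forall>y\<in>set (map ?g (concat (map (\<lambda>(V, Q). compress V (f Q)) L))). y \<in> carrier_mat n n"
    using Cons.prems carrier by fastforce
  then have "msum n (map ?g (concat (map (\<lambda>(V, Q). compress V (f Q)) (x # L))))
      = msum n (map ?g (compress V (f Q))) + msum n (map (\<lambda>(V, Q). cadj V * H Q * V) L)"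
    using Cons carrier[of V "f Q"] V x by (simp add: msum_append)
  also have "msum n (map ?g (compress V (f Q))) = cadj V * H Q * V"
    using msum_compress[of "f Q" "fst Q" G V n] Cons.prems x V by auto
  finally show ?case using x by simp
qed simp

lemma is_mcc_concat_compress:
  assumes mc: "matrix_convex h K" and mcc: "is_mcc h (n, X) L"
    and f: "\<forall>(V, Q)\<in>set L. is_mcc h Q (f Q) \<and> (\<forall>(W, R)\<in>set (f Q). R \<in> K)"
  shows "is_mcc h (n, X) (concat (map (\<lambda>(V, Q). compress V (f Q)) L))"
proof -
  define L' where "L' = concat (map (\<lambda>(V, Q). compress V (f Q)) L)"
  have Lc: "\<forall>(V, Q)\<in>set L. V \<in> carrier_mat (fst Q) n" using mcc unfolding is_mcc_def by auto
  have fmcc: "is_mcc h (fst Q, snd Q) (f Q)" if "(V, Q) \<in> set L" for V Q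
    using f that by auto
  have fc: "\<forall>(W, R)\<in>set (f Q). W \<in> carrier_mat (fst R) (fst Q)" if "(V, Q) \<in> set L" for V Q
    using is_mcc_carrier[OF fmcc[OF that]] by auto
  have "msum n (map (\<lambda>(V, Q). cadj V * 1\<^sub>m (fst Q) * V) L')
      = msum n (map (\<lambda>(V, Q). cadj V * 1\<^sub>m (fst Q) * V) L)"
    unfolding L'_def using Lc fc fmcc
    by (intro msum_concat_compress) (fastforce simp: is_mcc_iff)
  moreover have "msum n (map (\<lambda>(V, Q). cadj V * (snd Q ! j) * V) L')
      = msum n (map (\<lambda>(V, Q). cadj V * (snd Q ! j) * V) L)" if j: "j < h" for j
  proof -
    have "snd R ! j \<in> carrier_mat (fst R) (fst R)" if "(W, R) \<in> set (f Q)" "(V, Q) \<in> set L"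
      for V Q W R
      using f that j matrix_convex_memberD[OF mc, of "fst R" "snd R"] by fastforce
    then show ?thesis
      unfolding L'_def using Lc fc fmcc j
      by (intro msum_concat_compress) (fastforce simp: is_mcc_iff)
  qed
  moreover have "L' \<noteq> []"
  proof -
    obtain V Q where VQ: "(V, Q) \<in> set L" using mcc unfolding is_mcc_def by (cases L) auto
    then have "f Q \<noteq> []" using fmcc[OF VQ] unfolding is_mcc_def by simp
    then show ?thesis using VQ unfolding L'_def compress_def by force
  qed
  moreover have "\<forall>(V, Q)\<in>set L'. V \<in> carrier_mat (fst Q) n"
    unfolding L'_def compress_def using Lc fc by fastforce
  ultimately show ?thesis using mcc unfolding L'_def is_mcc_iff by auto
qed

lemma matrix_convex_mcc_decomposable:
  assumes mc: "matrix_convex h K" and EK: "E \<subseteq> K"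
  shows "matrix_convex h {P \<in> K. mcc_decomposable h E P}"
  unfolding matrix_convex_def
proof (intro conjI allI impI ballI)
  show "sa_tuple h P" if "P \<in> {P \<in> K. mcc_decomposable h E P}" for P
    using mc that unfolding matrix_convex_def by auto
next
  fix n X L assume n: "0 < n" and L: "\<forall>(V, Q)\<in>set L. Q \<in> {P \<in> K. mcc_decomposable h E P}"
    and mcc: "is_mcc h (n, X) L"
  have "\<forall>(V, Q)\<in>set L. Q \<in> K" using L by auto
  then have "(n, X) \<in> K" using matrix_convex_closed[OF mc n _ mcc] by simp
  have "\<exists>M. (\<forall>(W, R)\<in>set M. R \<in> E) \<and> is_mcc h Q M" if "Q \<in> snd ` set L" for Q
    using L that unfolding mcc_decomposable_def by fastforce
  then obtain f where f: "\<And>Q. Q \<in> snd ` set L \<Longrightarrow> (\<forall>(W, R)\<in>set (f Q). R \<in> E) \<and> is_mcc h Q (f Q)"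
    by metis
  have "is_mcc h Q (f Q) \<and> (\<forall>(W, R)\<in>set (f Q). R \<in> K)" if "(V, Q) \<in> set L" for V Q
  proof -
    have "Q \<in> snd ` set L" using that by force
    then show ?thesis using f EK by blast
  qed
  then have "\<forall>(V, Q)\<in>set L. is_mcc h Q (f Q) \<and> (\<forall>(W, R)\<in>set (f Q). R \<in> K)"
    by blast
  then have "is_mcc h (n, X) (concat (map (\<lambda>(V, Q). compress V (f Q)) L))"
    by (rule is_mcc_concat_compress[OF mc mcc])
  moreover have "R \<in> E" if "(W, R) \<in> set (concat (map (\<lambda>(V, Q). compress V (f Q)) L))" for W R
  proof -
    have "\<exists>x\<in>set L. (W, R) \<in> set (compress (fst x) (f (snd x)))"
      using that by (simp add: split_beta)
    then obtain x where x: "x \<in> set L" "(W, R) \<in> set (compress (fst x) (f (snd x)))" by blast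
    then obtain W' where "(W', R) \<in> set (f (snd x))" unfolding compress_def by auto
    then show ?thesis using f[of "snd x"] x(1) by auto
  qed
  then have "\<forall>(W, R)\<in>set (concat (map (\<lambda>(V, Q). compress V (f Q)) L)). R \<in> E" by blast
  ultimately show "(n, X) \<in> {P \<in> K. mcc_decomposable h E P}"
    using \<open>(n, X) \<in> K\<close> unfolding mcc_decomposable_def by blast
qed

lemma mcc_decomposable_self:
  assumes mc: "matrix_convex h K" and EK: "E \<subseteq> K" and P: "P \<in> E"
  shows "mcc_decomposable h E P"
proof -
  obtain m W where PW: "P = (m, W)" by force
  then have PK: "(m, W) \<in> K" using P EK by auto
  note W = matrix_convex_memberD[OF mc PK]
  have "map (\<lambda>B. cadj (1\<^sub>m m) * B * 1\<^sub>m m) W = W"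
    by (rule map_idI) (use W(3) in auto)
  then have "is_mcc h (m, W) [(1\<^sub>m m, (m, W))]"
    using is_mcc_single_unitary[OF unitary_one W(2,3)] by simp
  then show ?thesis using P PW unfolding mcc_decomposable_def by (intro exI[of _ "[(1\<^sub>m m, (m, W))]"]) auto
qed

lemma mconv_subset_mcc_decomposable:
  assumes "matrix_convex h K" "E \<subseteq> K"
  shows "mconv h E \<subseteq> {P \<in> K. mcc_decomposable h E P}"
  using matrix_convex_mcc_decomposable[OF assms] mcc_decomposable_self[OF assms] assms(2)
  unfolding mconv_def by blast

subsection \<open>Projections\<close>

lemma is_mcc_filter_nonzero:
  assumes mcc: "is_mcc d (n, X) L" and n: "0 < n"
  shows "is_mcc d (n, X) (filter (\<lambda>(V, Q). V \<noteq> 0\<^sub>m (fst Q) n) L)"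
proof -
  let ?L = "filter (\<lambda>(V, Q). V \<noteq> 0\<^sub>m (fst Q) n) L"
  have Lc: "\<forall>(V, Q)\<in>set L. V \<in> carrier_mat (fst Q) n" using mcc unfolding is_mcc_def by auto
  have sums: "msum n (map (\<lambda>(V, Q). cadj V * G Q * V) ?L) = msum n (map (\<lambda>(V, Q). cadj V * G Q * V) L)"
    for G
    using Lc by (intro msum_filter) auto
  have "?L \<noteq> []"
  proof
    assume "?L = []"
    then have "1\<^sub>m n = (0\<^sub>m n n :: complex mat)"
      using mcc sums[of "\<lambda>Q. 1\<^sub>m (fst Q)"] unfolding is_mcc_iff by simp
    then have "(1\<^sub>m n :: complex mat) $$ (0, 0) = 0\<^sub>m n n $$ (0, 0)" by simp
    then show False using n by simp
  qed
  then show ?thesis using mcc Lc unfolding is_mcc_iff sums by auto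
qed

lemma is_mcc_take:
  assumes mcc: "is_mcc h (n, X @ Y) L" and X: "length X = g"
  shows "is_mcc g (n, X) (map (\<lambda>(V, Q). (V, (fst Q, take g (snd Q)))) L)"
proof -
  let ?L = "map (\<lambda>(V, Q). (V, (fst Q, take g (snd Q)))) L"
  have h: "h = g + length Y" using mcc X unfolding is_mcc_def by auto
  have sums: "map (\<lambda>(V, Q). cadj V * G Q * V) ?L = map (\<lambda>(V, Q). cadj V * G (fst Q, take g (snd Q)) * V) L"
    for G by (induction L) auto
  have "msum n (map (\<lambda>(V, Q). cadj V * 1\<^sub>m (fst Q) * V) ?L) = 1\<^sub>m n"
    using mcc unfolding sums[of "\<lambda>Q. 1\<^sub>m (fst Q)"] by (simp add: is_mcc_iff)
  moreover have "msum n (map (\<lambda>(V, Q). cadj V * (snd Q ! j) * V) ?L) = X ! j" if j: "j < g" for j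
    using mcc j X h unfolding sums[of "\<lambda>Q. snd Q ! j"] by (simp add: is_mcc_iff nth_append)
  moreover have "\<forall>(V, Q)\<in>set ?L. V \<in> carrier_mat (fst Q) n" using mcc unfolding is_mcc_def by auto
  ultimately show ?thesis using mcc X unfolding is_mcc_iff by auto
qed

lemma take_in_proj:
  assumes "matrix_convex h K" "(q, W) \<in> K" "g \<le> h"
  shows "(q, take g W) \<in> proj g K"
  using matrix_convex_memberD(2)[OF assms(1,2)] assms(2,3) unfolding proj_def
  by (auto intro!: exI[of _ "drop g W"])

definition proj_summands :: "nat \<Rightarrow> nat \<Rightarrow> (complex mat \<times> tup) list \<Rightarrow> (complex mat \<times> tup) list" where
  "proj_summands g n L =
    map (\<lambda>(V, Q). (V, (fst Q, take g (snd Q)))) (filter (\<lambda>(V, Q). V \<noteq> 0\<^sub>m (fst Q) n) L)"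

lemma proj_summands_memberE:
  assumes "(V, P) \<in> set (proj_summands g n L)"
  obtains q W where "(V, (q, W)) \<in> set L" "P = (q, take g W)"
  using assms unfolding proj_summands_def by force

lemma is_mcc_proj_summands:
  assumes mc: "matrix_convex h K" and g: "g \<le> h" and n: "0 < n" and X: "length X = g"
    and mcc: "is_mcc h (n, X @ Y) L" and LK: "\<forall>(V, Q)\<in>set L. Q \<in> K"
  shows "is_mcc g (n, X) (proj_summands g n L)"
    and "\<forall>(V, Q)\<in>set (proj_summands g n L). Q \<in> proj g K \<and> V \<noteq> 0\<^sub>m (fst Q) n"
proof -
  show "is_mcc g (n, X) (proj_summands g n L)"
    unfolding proj_summands_def using is_mcc_take[OF is_mcc_filter_nonzero[OF mcc n] X] .
  show "\<forall>(V, Q)\<in>set (proj_summands g n L). Q \<in> proj g K \<and> V \<noteq> 0\<^sub>m (fst Q) n"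
    unfolding proj_summands_def using LK take_in_proj[OF mc _ g] by fastforce
qed

subsection \<open>Lifting free extreme points\<close>

lemma free_extreme_lift:
  assumes mc: "matrix_convex h K" and fe: "free_extreme h K (q, W)"
    and ue: "unit_equiv (q, take g W) (m, D)" and D: "\<forall>B\<in>set D. B \<in> carrier_mat m m"
  shows "\<exists>Y. free_extreme h K (m, D @ Y)"
proof -
  obtain U where qm: "q = m" and U: "unitary m U" and take: "take g W = map (\<lambda>B. cadj U * B * U) D"
    using ue unfolding unit_equiv_iff by auto
  define W' where "W' = map (\<lambda>B. cadj (cadj U) * B * cadj U) W"
  have "free_extreme h K (m, W')"
    unfolding W'_def using free_extreme_unitary_conj[OF mc _ unitary_cadj[OF U]] fe qm by simp
  moreover have "take g W' = D"
  proof -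
    have "take g W' = map (\<lambda>B. U * (cadj U * B * U) * cadj U) D"
      unfolding W'_def take_map take by simp
    also have "\<dots> = D" by (rule map_idI) (use D unitary_conj_cancel[OF U] in auto)
    finally show ?thesis .
  qed
  ultimately have "free_extreme h K (m, D @ drop g W')" by (metis append_take_drop_id)
  then show ?thesis by blast
qed

lemma free_extreme_lift_alternative:
  assumes mc: "matrix_convex h K" and fe: "free_extreme h K (q, W)"
    and Xc: "\<forall>B\<in>set X. B \<in> carrier_mat n n" and P: "P = (q, take g W)"
    and alt: "unit_equiv P (n, X) \<or> (\<exists>Z\<in>proj g K. unit_equiv P (dsum (n, X) Z))"
  shows "(\<exists>Y. free_extreme h K (n, X @ Y)) \<or>
    (\<exists>Z\<in>proj g K. \<exists>Y. free_extreme h K (fst (dsum (n, X) Z), snd (dsum (n, X) Z) @ Y))"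
  using alt
proof
  assume "unit_equiv P (n, X)"
  then have "\<exists>Y. free_extreme h K (n, X @ Y)" using free_extreme_lift[OF mc fe _ Xc] P by simp
  then show ?thesis ..
next
  assume "\<exists>Z\<in>proj g K. unit_equiv P (dsum (n, X) Z)"
  then obtain Z where Z: "Z \<in> proj g K" "unit_equiv P (dsum (n, X) Z)" by blast
  obtain k Zs where kZs: "Z = (k, Zs)" by fastforce
  obtain Y1 where "(k, Zs @ Y1) \<in> K" using Z(1) unfolding kZs proj_def by auto
  then have "\<forall>B\<in>set Zs. B \<in> carrier_mat k k" using matrix_convex_memberD(3)[OF mc] by simp
  then have "\<exists>Y. free_extreme h K (n + k, map2 (bdiag n k) X Zs @ Y)"
    using free_extreme_lift[OF mc fe _ map2_bdiag_carrier[OF Xc]] Z(2) P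
    unfolding kZs dsum_eq_bdiag by simp
  then have "\<exists>Y. free_extreme h K (fst (dsum (n, X) Z), snd (dsum (n, X) Z) @ Y)"
    unfolding kZs dsum_eq_bdiag by simp
  then show ?thesis using Z(1) by blast
qed

theorem mainTheorem14:
  fixes h g n :: nat and K :: "tup set" and X :: "complex mat list"
  assumes "matrix_convex h K"
    and "K = mconv h {P \<in> K. free_extreme h K P}"
    and "g < h"
    and "(n, X) \<in> proj g K"
    and "free_extreme g (proj g K) (n, X)"
  shows "(\<exists>Y. free_extreme h K (n, X @ Y)) \<or>
         (\<exists>Z \<in> proj g K. \<exists>Y. free_extreme h K (fst (dsum (n, X) Z), snd (dsum (n, X) Z) @ Y))"
proof -
  note mc = assms(1) and g = less_imp_le[OF assms(3)]
  obtain Y0 where X: "length X = g" and XY: "(n, X @ Y0) \<in> K" using assms(4) unfolding proj_def by auto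
  have n: "0 < n" and Xc: "\<forall>B\<in>set X. B \<in> carrier_mat n n"
    using matrix_convex_memberD(1,3)[OF mc XY] by auto
  have "(n, X @ Y0) \<in> mconv h {P \<in> K. free_extreme h K P}" using XY assms(2) by simp
  then obtain L where LE: "\<forall>(V, Q)\<in>set L. free_extreme h K Q" and mcc: "is_mcc h (n, X @ Y0) L"
    using mconv_subset_mcc_decomposable[OF mc, of "{P \<in> K. free_extreme h K P}"]
    unfolding mcc_decomposable_def by blast
  have "\<forall>(V, Q)\<in>set L. Q \<in> K" using LE unfolding free_extreme_def by auto
  note proj = is_mcc_proj_summands[OF mc g n X mcc this]
  have "proj_summands g n L \<noteq> []" using proj(1) unfolding is_mcc_def by simp
  then obtain V P where VP: "(V, P) \<in> set (proj_summands g n L)"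
    using last_in_set by (metis prod.collapse)
  then obtain q W where VqW: "(V, (q, W)) \<in> set L" and P: "P = (q, take g W)"
    by (rule proj_summands_memberE)
  have fe: "free_extreme h K (q, W)" using bspec[OF LE VqW] by simp
  have "\<forall>(V, P)\<in>set (proj_summands g n L). unit_equiv P (n, X) \<or> (\<exists>Z\<in>proj g K. unit_equiv P (dsum (n, X) Z))"
    using assms(5) proj unfolding free_extreme_def by simp
  from bspec[OF this VP] show ?thesis
    using free_extreme_lift_alternative[OF mc fe Xc P] by simp
qed

end
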